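(* Let $t>1$ be an integer, let $x,y$ be elements both lying in $A(t)$ or both lying in $B(t)$, with $x,y\notin H(t)$, and suppose $x=(c\rho_t)^{\alpha}(d\rho_t)^{\beta}\,y\,(c\rho_t)^{\gamma}(d\rho_t)^{\delta}$ for some integers $\alpha,\beta,\gamma,\delta$. If $x,y\in A(t)$, then $\alpha+\gamma$, $\beta$ and $\delta$ are uniquely determined modulo $t$ by this equality. If $x,y\in B(t)$, then $\beta+\delta$, $\alpha$ and $\gamma$ are uniquely determined modulo $t$ by this equality.
   Context: Fix integers $m,n>1$ and let $G_{mn}=\langle a,b;\ [a^m,b^n]=1\rangle$; $c=a^m$, $d=b^n$, $H=\langle c,d\rangle$, $A=\langle a,H\rangle$, $B=\langle b,H\rangle$. For an integer $t>1$ let $G_{mn}(t)=\langle a,b;\ [a^m,b^n]=1,\ a^{mt}=b^{nt}=1\rangle$, $\rho_t:G_{mn}\to G_{mn}(t)$ the natural homomorphism, $H(t)=H\rho_t\cong H/H^t$ (so $c\rho_t=cH^t$, $d\rho_t=dH^t$), $A(t)=A\rho_t$, $B(t)=B\rho_t$. *)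

theory Defs
  imports "HOL-Algebra.Algebra" "HOL-Number_Theory.Cong"
begin

text \<open>Words over the generators a (False) and b (True); a letter (g, i) is
  the generator g if i = False and its inverse if i = True.\<close>
type_synonym word = "(bool \<times> bool) list"

definition ltr :: "bool \<Rightarrow> word" where "ltr g = [(g, False)]"

definition winv :: "word \<Rightarrow> word" where
  "winv w = rev (map (\<lambda>(g, i). (g, \<not> i)) w)"

definition wpow :: "word \<Rightarrow> nat \<Rightarrow> word" where
  "wpow w k = concat (replicate k w)"

definition relators :: "nat \<Rightarrow> nat \<Rightarrow> nat \<Rightarrow> word set" where
  "relators m n t =
     { winv (wpow (ltr False) m) @ winv (wpow (ltr True) n) @ wpow (ltr False) m @ wpow (ltr True) n,
       wpow (ltr False) (m * t),
       wpow (ltr True) (n * t) }"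

inductive weq :: "nat \<Rightarrow> nat \<Rightarrow> nat \<Rightarrow> word \<Rightarrow> word \<Rightarrow> bool" for m n t where
  weq_refl: "weq m n t u u"
| weq_sym: "weq m n t u v \<Longrightarrow> weq m n t v u"
| weq_trans: "weq m n t u v \<Longrightarrow> weq m n t v w \<Longrightarrow> weq m n t u w"
| weq_cancel: "weq m n t (u @ [(g, i), (g, \<not> i)] @ v) (u @ v)"
| weq_rel: "r \<in> relators m n t \<Longrightarrow> weq m n t (u @ r @ v) (u @ v)"

definition Gmnt :: "nat \<Rightarrow> nat \<Rightarrow> nat \<Rightarrow> word set monoid" where
  "Gmnt m n t =
    \<lparr> carrier = range (\<lambda>w. Collect (weq m n t w)),
      monoid.mult = (\<lambda>P Q. {w. \<exists>x y. x \<in> P \<and> y \<in> Q \<and> weq m n t w (x @ y)}),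
      monoid.one = Collect (weq m n t []) \<rparr>"

definition gen_a :: "nat \<Rightarrow> nat \<Rightarrow> nat \<Rightarrow> word set" where
  "gen_a m n t = Collect (weq m n t (ltr False))"

definition gen_b :: "nat \<Rightarrow> nat \<Rightarrow> nat \<Rightarrow> word set" where
  "gen_b m n t = Collect (weq m n t (ltr True))"

text \<open>c rho_t = a^m and d rho_t = b^n in G_mn(t).\<close>
definition gen_c :: "nat \<Rightarrow> nat \<Rightarrow> nat \<Rightarrow> word set" where
  "gen_c m n t = gen_a m n t [^]\<^bsub>Gmnt m n t\<^esub> m"

definition gen_d :: "nat \<Rightarrow> nat \<Rightarrow> nat \<Rightarrow> word set" where
  "gen_d m n t = gen_b m n t [^]\<^bsub>Gmnt m n t\<^esub> n"

definition Ht :: "nat \<Rightarrow> nat \<Rightarrow> nat \<Rightarrow> word set set" where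
  "Ht m n t = generate (Gmnt m n t) {gen_c m n t, gen_d m n t}"

definition At :: "nat \<Rightarrow> nat \<Rightarrow> nat \<Rightarrow> word set set" where
  "At m n t = generate (Gmnt m n t) (insert (gen_a m n t) (Ht m n t))"

definition Bt :: "nat \<Rightarrow> nat \<Rightarrow> nat \<Rightarrow> word set set" where
  "Bt m n t = generate (Gmnt m n t) (insert (gen_b m n t) (Ht m n t))"

end

theory Submission
  imports Defs
begin

(* Let u be the generator (a or b) of the factor containing y, z its power c or d there, and
   e the other generator of H(t) = <z, e>.  Since z is central in the factor, the equation
   becomes x = e^j1 y e^j2 z^k, and j1, j2, k are recovered modulo t as follows.
   Counting exponents of u modulo p t (where z = u^p) sends z to p and e to 0; this recovers k.
   For j1 and j2, G acts on pairs (w, r): w is a reduced alternating word in u (exponents mod p)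
   and e (exponents mod t), taken up to right multiplication by e, and r counts the remaining
   generator v modulo q, where e = v^q.  Here u and e act by left multiplication and z acts
   trivially.  Every y in the factor is such a word w times an element of H(t) and moves the
   base point to (w, 0).  If y is not in H(t), then w is not a power of e, and e^j fixes (w, 0)
   only when t divides j.  So the image of the base point under x determines j1, and its image
   under x^-1 determines j2. *)

section \<open>The group G_mn(t) and its universal property\<close>

abbreviation wclass :: "nat \<Rightarrow> nat \<Rightarrow> nat \<Rightarrow> word \<Rightarrow> word set" where
  "wclass m n t w \<equiv> Collect (weq m n t w)"

definition gen :: "nat \<Rightarrow> nat \<Rightarrow> nat \<Rightarrow> bool \<Rightarrow> word set" where
  "gen m n t h = wclass m n t (ltr h)"

definition rel_exp :: "nat \<Rightarrow> nat \<Rightarrow> bool \<Rightarrow> nat" where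
  "rel_exp m n h = (if h then n else m)"

lemma weq_append: "weq m n t u u' \<Longrightarrow> weq m n t v v' \<Longrightarrow> weq m n t (u @ v) (u' @ v')"
proof -
  have weq_in_context: "weq m n t (p @ u @ q) (p @ u' @ q)" if "weq m n t u u'" for p q u u'
    using that
  proof (induction rule: weq.induct)
    case (weq_cancel u g i v)
    show ?case using weq.weq_cancel[of m n t "p @ u"] by simp
  next
    case (weq_rel r u v)
    show ?case using weq.weq_rel[OF weq_rel, of "p @ u"] by simp
  qed (auto intro: weq.intros)
  assume "weq m n t u u'" "weq m n t v v'"
  then show ?thesis
    using weq_in_context[of u u' "[]" v] weq_in_context[of v v' u' "[]"] by (auto intro: weq.weq_trans)
qed

lemma wclass_eq_iff: "wclass m n t u = wclass m n t v \<longleftrightarrow> weq m n t u v"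
  by (auto intro: weq.intros)

lemma carrier_Gmnt: "carrier (Gmnt m n t) = range (wclass m n t)"
  by (simp add: Gmnt_def)

lemma one_Gmnt: "\<one>\<^bsub>Gmnt m n t\<^esub> = wclass m n t []"
  by (simp add: Gmnt_def)

lemma mult_wclass: "wclass m n t u \<otimes>\<^bsub>Gmnt m n t\<^esub> wclass m n t v = wclass m n t (u @ v)"
  unfolding Gmnt_def by (auto intro: weq.intros weq_append)

lemma weq_winv_append: "weq m n t (winv w @ w) []"
proof (induction w)
  case (Cons l w)
  obtain g i where l: "l = (g, i)" by fastforce
  have "weq m n t (winv w @ [(g, \<not> i), (g, \<not> \<not> i)] @ w) (winv w @ w)"
    by (rule weq.weq_cancel)
  with Cons show ?case by (auto simp: l winv_def intro: weq.weq_trans)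
qed (simp add: winv_def weq.weq_refl)

lemma group_Gmnt: "group (Gmnt m n t)"
proof (rule groupI)
  fix x assume "x \<in> carrier (Gmnt m n t)"
  then obtain w where "x = wclass m n t w" by (auto simp: carrier_Gmnt)
  then show "\<exists>y\<in>carrier (Gmnt m n t). y \<otimes>\<^bsub>Gmnt m n t\<^esub> x = \<one>\<^bsub>Gmnt m n t\<^esub>"
    by (intro bexI[of _ "wclass m n t (winv w)"])
       (auto simp: mult_wclass one_Gmnt carrier_Gmnt wclass_eq_iff weq_winv_append)
qed (auto simp: carrier_Gmnt mult_wclass one_Gmnt)

lemma wclass_pow: "wclass m n t w [^]\<^bsub>Gmnt m n t\<^esub> (k::nat) = wclass m n t (wpow w k)"
proof (induction k)
  case (Suc k)
  have "wpow w (Suc k) = wpow w k @ w" by (induction k) (simp_all add: wpow_def)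
  with Suc show ?case by (simp add: mult_wclass)
qed (simp add: one_Gmnt wpow_def)

lemma inv_wclass: "inv\<^bsub>Gmnt m n t\<^esub> (wclass m n t w) = wclass m n t (winv w)"
proof -
  interpret group "Gmnt m n t" by (rule group_Gmnt)
  show ?thesis
    by (rule inv_equality)
       (auto simp: mult_wclass one_Gmnt wclass_eq_iff weq_winv_append carrier_Gmnt)
qed

lemma relator_trivial: "r \<in> relators m n t \<Longrightarrow> wclass m n t r = \<one>\<^bsub>Gmnt m n t\<^esub>"
  using weq_rel[of r m n t "[]" "[]"] by (simp add: one_Gmnt wclass_eq_iff)

definition word_eval :: "('c, 'd) monoid_scheme \<Rightarrow> (bool \<Rightarrow> 'c) \<Rightarrow> word \<Rightarrow> 'c" where
  "word_eval K f w = foldr (\<lambda>(h, i) x. (if i then inv\<^bsub>K\<^esub> (f h) else f h) \<otimes>\<^bsub>K\<^esub> x) w \<one>\<^bsub>K\<^esub>"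

definition lift_hom ::
    "nat \<Rightarrow> nat \<Rightarrow> nat \<Rightarrow> ('c, 'd) monoid_scheme \<Rightarrow> (bool \<Rightarrow> 'c) \<Rightarrow> word set \<Rightarrow> 'c" where
  "lift_hom m n t K f P = word_eval K f (SOME w. P = wclass m n t w)"

context group
begin

lemma word_eval_Nil [simp]: "word_eval G f [] = \<one>"
  and word_eval_Cons [simp]:
    "word_eval G f ((h, i) # w) = (if i then inv (f h) else f h) \<otimes> word_eval G f w"
  by (simp_all add: word_eval_def)

lemma word_eval_closed [simp]: "(\<And>h. f h \<in> carrier G) \<Longrightarrow> word_eval G f w \<in> carrier G"
  by (induction w) auto

lemma word_eval_append:
  "(\<And>h. f h \<in> carrier G) \<Longrightarrow> word_eval G f (u @ w) = word_eval G f u \<otimes> word_eval G f w"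
  by (induction u) (auto simp: m_assoc)

lemma word_eval_winv:
  "(\<And>h. f h \<in> carrier G) \<Longrightarrow> word_eval G f (winv w) = inv (word_eval G f w)"
  by (induction w) (auto simp: winv_def word_eval_append inv_mult_group)

lemma word_eval_wpow_ltr: "(\<And>h. f h \<in> carrier G) \<Longrightarrow> word_eval G f (wpow (ltr h) k) = f h [^] k"
proof (induction k)
  case (Suc k)
  have "wpow (ltr h) (Suc k) = ltr h @ wpow (ltr h) k" by (simp add: wpow_def)
  with Suc show ?case using nat_pow_Suc2[of "f h" k] by (simp add: word_eval_append ltr_def)
qed (simp add: wpow_def)

lemma weq_word_eval:
  assumes f: "\<And>h. f h \<in> carrier G"
    and comm: "f False [^] m \<otimes> f True [^] n = f True [^] n \<otimes> f False [^] m"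
    and ord: "\<And>h. f h [^] (rel_exp m n h * t) = \<one>"
  shows "weq m n t u v \<Longrightarrow> word_eval G f u = word_eval G f v"
proof (induction rule: weq.induct)
  case (weq_cancel u g i v)
  then show ?case using f by (cases i) (simp_all add: word_eval_append m_assoc[symmetric])
next
  case (weq_rel r u v)
  have "word_eval G f r = \<one>"
    using weq_rel comm f ord[of False] ord[of True]
    by (auto simp: relators_def word_eval_append word_eval_winv word_eval_wpow_ltr rel_exp_def
        m_assoc[symmetric])
  then show ?case using f by (simp add: word_eval_append)
qed simp_all

lemma lift_hom:
  assumes f: "\<And>h. f h \<in> carrier G"
    and comm: "f False [^] m \<otimes> f True [^] n = f True [^] n \<otimes> f False [^] m"
    and ord: "\<And>h. f h [^] (rel_exp m n h * t) = \<one>"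
  shows "lift_hom m n t G f \<in> hom (Gmnt m n t) G" and "lift_hom m n t G f (gen m n t h) = f h"
proof -
  have eval: "lift_hom m n t G f (wclass m n t w) = word_eval G f w" for w
  proof -
    have "wclass m n t w = wclass m n t (SOME w'. wclass m n t w = wclass m n t w')"
      by (rule someI) (rule refl)
    then show ?thesis
      unfolding lift_hom_def wclass_eq_iff by (metis weq_word_eval[OF assms])
  qed
  show "lift_hom m n t G f \<in> hom (Gmnt m n t) G"
    by (rule homI) (auto simp: carrier_Gmnt mult_wclass eval word_eval_append f)
  show "lift_hom m n t G f (gen m n t h) = f h"
    using eval f by (simp add: gen_def ltr_def)
qed

end

context group
begin

lemma int_pow_eq_nat_mod:
  assumes "x \<in> carrier G" and "x [^] t = \<one>" and "0 < t"
  shows "x [^] (j::int) = x [^] nat (j mod int t)"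
proof -
  have "int (ord x) dvd int t" using pow_eq_id[OF assms(1)] assms(2) by simp
  moreover have "int t dvd j mod int t - j" using mod_eq_dvd_iff[of "j mod int t" "int t" j] by simp
  ultimately have "x [^] j = x [^] (j mod int t)"
    using int_pow_eq[OF assms(1)] dvd_trans by blast
  also have "\<dots> = x [^] nat (j mod int t)" using assms(3) by (simp add: pow_nat)
  finally show ?thesis .
qed

lemma inv_eq_nat_pow:
  assumes "x \<in> carrier G" and "x [^] (N::nat) = \<one>" and "0 < N"
  shows "inv x = x [^] (N - 1)"
proof (rule inv_equality)
  show "x [^] (N - 1) \<otimes> x = \<one>" using assms nat_pow_Suc[of x "N - 1"] by simp
qed (use assms in simp_all)

lemma generate_subset_left_closed:
  assumes "S \<subseteq> carrier G" and "M \<subseteq> carrier G" and "\<one> \<in> M"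
    and "\<And>s x. s \<in> S \<Longrightarrow> x \<in> M \<Longrightarrow> s \<otimes> x \<in> M"
    and "\<And>s x. s \<in> S \<Longrightarrow> x \<in> M \<Longrightarrow> inv s \<otimes> x \<in> M"
  shows "generate G S \<subseteq> M"
proof
  fix y assume y: "y \<in> generate G S"
  have "\<forall>x \<in> M. y \<otimes> x \<in> M"
    using y
  proof induction
    case (eng h1 h2)
    have "h1 \<otimes> h2 \<otimes> x = h1 \<otimes> (h2 \<otimes> x)" if "x \<in> M" for x
      using that eng.hyps assms(1,2) generate_in_carrier by (auto intro: m_assoc)
    then show ?case using eng.IH by auto
  qed (use assms in auto)
  then show "y \<in> M"
    using assms(3) generate_in_carrier[OF assms(1) y] by force
qed

lemma generate_commute:
  assumes "S \<subseteq> carrier G" and "a \<in> carrier G" and "\<And>s. s \<in> S \<Longrightarrow> a \<otimes> s = s \<otimes> a"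
    and "y \<in> generate G S"
  shows "a \<otimes> y = y \<otimes> a"
  using assms(4)
proof induction
  case (inv h)
  have h: "h \<in> carrier G" using inv assms(1) by auto
  have "a \<otimes> inv h = inv h \<otimes> (h \<otimes> a) \<otimes> inv h"
    using h assms(2) by (simp add: m_assoc[symmetric])
  also have "\<dots> = inv h \<otimes> a"
    using h assms(2) by (simp add: assms(3)[OF inv, symmetric] m_assoc)
  finally show ?case .
next
  case (eng h1 h2)
  have "h1 \<in> carrier G" "h2 \<in> carrier G" using eng.hyps assms(1) generate_in_carrier by auto
  then show ?case using eng.IH assms(2) by (metis m_assoc)
qed (use assms in auto)

end

lemma restrict_in_Bij:
  assumes "f ` S \<subseteq> S" and "f' ` S \<subseteq> S"
    and "\<And>x. x \<in> S \<Longrightarrow> f' (f x) = x" and "\<And>x. x \<in> S \<Longrightarrow> f (f' x) = x"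
  shows "restrict f S \<in> Bij S"
proof -
  have "bij_betw f S S" by (rule bij_betw_byWitness[where f' = f']) (use assms in auto)
  then show ?thesis by (simp add: Bij_def bij_betw_cong[of S "restrict f S" f])
qed

lemma BijGroup_pow_restrict:
  assumes "f ` S \<subseteq> S" and "restrict f S \<in> Bij S"
  shows "restrict f S [^]\<^bsub>BijGroup S\<^esub> (k::nat) = restrict (f ^^ k) S"
proof (induction k)
  case 0
  show ?case by (simp add: BijGroup_def)
next
  case (Suc k)
  interpret group "BijGroup S" by (rule group_BijGroup)
  have carrier: "carrier (BijGroup S) = Bij S" by (simp add: BijGroup_def)
  have "restrict f S [^]\<^bsub>BijGroup S\<^esub> k \<in> carrier (BijGroup S)"
    by (rule nat_pow_closed) (use assms(2) carrier in simp)
  then have pow_k: "restrict (f ^^ k) S \<in> Bij S" by (simp only: Suc.IH carrier)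
  have "restrict f S [^]\<^bsub>BijGroup S\<^esub> Suc k = restrict (f ^^ k) S \<otimes>\<^bsub>BijGroup S\<^esub> restrict f S"
    by (simp only: nat_pow_Suc Suc.IH)
  also have "\<dots> = compose S (restrict (f ^^ k) S) (restrict f S)"
    using pow_k assms(2) by (simp add: BijGroup_def)
  also have "\<dots> = restrict (f ^^ Suc k) S"
    using assms(1)
    by (auto simp: compose_def funpow_Suc_right image_subset_iff simp del: funpow.simps)
  finally show ?case .
qed

section \<open>Reduced syllable words\<close>

(* A syllable list [(h1, k1), (h2, k2), ...] stands for x_h1^k1 x_h2^k2 ... with x_False = u and
   x_True = e (see syl_prod below); reduced lists are the normal forms of the free product of
   cyclic groups of orders p and t. *)
type_synonym syllables = "(bool \<times> nat) list"

definition syl_bound :: "nat \<Rightarrow> nat \<Rightarrow> bool \<Rightarrow> nat" where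
  "syl_bound p t h = (if h then t else p)"

fun reduced :: "nat \<Rightarrow> nat \<Rightarrow> syllables \<Rightarrow> bool" where
  "reduced p t [] = True"
| "reduced p t ((h, k) # w) \<longleftrightarrow>
     0 < k \<and> k < syl_bound p t h \<and> reduced p t w \<and> (w = [] \<or> fst (hd w) \<noteq> h)"

definition hd_exp :: "bool \<Rightarrow> syllables \<Rightarrow> nat" where
  "hd_exp h w = (case w of [] \<Rightarrow> 0 | (h', k) # _ \<Rightarrow> if h' = h then k else 0)"

definition tl_syl :: "bool \<Rightarrow> syllables \<Rightarrow> syllables" where
  "tl_syl h w = (case w of [] \<Rightarrow> [] | (h', _) # w' \<Rightarrow> if h' = h then w' else w)"

definition cons_syl :: "bool \<Rightarrow> nat \<Rightarrow> syllables \<Rightarrow> syllables" where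
  "cons_syl h k w = (if k = 0 then w else (h, k) # w)"

definition shift_syl :: "nat \<Rightarrow> bool \<Rightarrow> nat \<Rightarrow> syllables \<Rightarrow> syllables" where
  "shift_syl N h k w = cons_syl h ((hd_exp h w + k) mod N) (tl_syl h w)"

(* Left multiplication by e^k on cosets modulo right multiplication by e: a power of e lies
   in the trivial coset, which e fixes. *)
definition rot_e :: "nat \<Rightarrow> nat \<Rightarrow> syllables \<Rightarrow> syllables" where
  "rot_e t k w = (if tl_syl True w = [] then w else shift_syl t True k w)"

lemma syl_bound_simps [simp]: "syl_bound p t False = p" "syl_bound p t True = t"
  by (simp_all add: syl_bound_def)

lemma reduced_tl_syl: "reduced p t w \<Longrightarrow> reduced p t (tl_syl h w)"
  by (cases w) (auto simp: tl_syl_def)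

lemma hd_exp_tl_syl: "reduced p t w \<Longrightarrow> hd_exp h (tl_syl h w) = 0"
  by (induction p t w rule: reduced.induct) (auto simp: hd_exp_def tl_syl_def split: list.split)

lemma hd_exp_less: "reduced p t w \<Longrightarrow> 0 < syl_bound p t h \<Longrightarrow> hd_exp h w < syl_bound p t h"
  by (cases w) (auto simp: hd_exp_def)

lemma cons_syl_hd_exp_tl_syl: "reduced p t w \<Longrightarrow> cons_syl h (hd_exp h w) (tl_syl h w) = w"
  by (induction p t w rule: reduced.induct) (auto simp: hd_exp_def tl_syl_def cons_syl_def)

lemma cons_syl:
  assumes "reduced p t w" and "hd_exp h w = 0" and "k < syl_bound p t h"
  shows "reduced p t (cons_syl h k w)" and "hd_exp h (cons_syl h k w) = k"
    and "tl_syl h (cons_syl h k w) = w"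
  using assms
  by (induction p t w rule: reduced.induct;
      auto simp: hd_exp_def tl_syl_def cons_syl_def split: if_splits)+

lemma shift_syl:
  assumes "reduced p t w" and "0 < syl_bound p t h"
  shows "reduced p t (shift_syl (syl_bound p t h) h k w)"
    and "hd_exp h (shift_syl (syl_bound p t h) h k w) = (hd_exp h w + k) mod syl_bound p t h"
    and "tl_syl h (shift_syl (syl_bound p t h) h k w) = tl_syl h w"
  using cons_syl[OF reduced_tl_syl[OF assms(1)] hd_exp_tl_syl[OF assms(1)]] assms(2)
  by (simp_all add: shift_syl_def)

lemma shift_syl_add:
  assumes "reduced p t w" and "0 < syl_bound p t h"
  shows "shift_syl (syl_bound p t h) h i (shift_syl (syl_bound p t h) h j w)
       = shift_syl (syl_bound p t h) h (i + j) w"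
proof -
  have "((hd_exp h w + j) mod syl_bound p t h + i) mod syl_bound p t h
      = (hd_exp h w + (i + j)) mod syl_bound p t h"
    by (simp add: mod_simps ac_simps)
  then show ?thesis
    using shift_syl[OF assms, of j]
    by (simp add: shift_syl_def[of _ h i] shift_syl_def[of _ h "i + j"])
qed

lemma shift_syl_dvd:
  assumes "reduced p t w" and "syl_bound p t h dvd k"
  shows "shift_syl (syl_bound p t h) h k w = w"
  using assms cons_syl_hd_exp_tl_syl[OF assms(1)] hd_exp_less[OF assms(1), of h]
  by (cases "syl_bound p t h = 0") (auto simp: shift_syl_def)

lemma rot_e_Nil [simp]: "rot_e t k [] = []"
  by (simp add: rot_e_def tl_syl_def)

lemma reduced_rot_e: "reduced p t w \<Longrightarrow> 0 < t \<Longrightarrow> reduced p t (rot_e t k w)"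
  using shift_syl(1)[of p t w True] by (simp add: rot_e_def)

lemma rot_e_add:
  assumes "reduced p t w" and "0 < t"
  shows "rot_e t i (rot_e t j w) = rot_e t (i + j) w"
  using shift_syl(3)[of p t w True j] shift_syl_add[of p t w True i j] assms
  by (simp add: rot_e_def)

lemma rot_e_dvd: "reduced p t w \<Longrightarrow> t dvd k \<Longrightarrow> rot_e t k w = w"
  using shift_syl_dvd[of p t w True k] by (simp add: rot_e_def)

lemma rot_e_cong:
  assumes "reduced p t w" and "0 < t" and "tl_syl True w \<noteq> []" and "rot_e t i w = rot_e t j w"
  shows "[i = j] (mod t)"
proof -
  have "hd_exp True (rot_e t i w) = hd_exp True (rot_e t j w)"
    using assms(4) by simp
  then have "[hd_exp True w + i = hd_exp True w + j] (mod t)"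
    using assms(1-3) shift_syl(2)[of p t w True] by (simp add: rot_e_def cong_def)
  then show ?thesis by (simp add: cong_add_lcancel_nat)
qed

section \<open>The action on cosets\<close>

definition coset_space :: "nat \<Rightarrow> nat \<Rightarrow> nat \<Rightarrow> (syllables \<times> nat) set" where
  "coset_space p q t = {(w, r). reduced p t w \<and> r < q}"

definition step_u :: "nat \<Rightarrow> syllables \<times> nat \<Rightarrow> syllables \<times> nat" where
  "step_u p = (\<lambda>(w, r). (shift_syl p False 1 w, r))"

(* The other generator v acts through a counter modulo q that carries into rot_e, so that
   v^q acts on the word component as e. *)
definition step_v :: "nat \<Rightarrow> nat \<Rightarrow> syllables \<times> nat \<Rightarrow> syllables \<times> nat" where
  "step_v q t = (\<lambda>(w, r). if Suc r < q then (w, Suc r) else (rot_e t 1 w, 0))"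

lemma step_u_funpow:
  assumes "reduced p t w" and "0 < p"
  shows "(step_u p ^^ k) (w, r) = (shift_syl p False k w, r)"
proof (induction k)
  case 0
  show ?case using shift_syl_dvd[OF assms(1), of False 0] by simp
next
  case (Suc k)
  then show ?case using shift_syl_add[OF assms(1), of False 1 k] assms(2) by (simp add: step_u_def)
qed

lemma step_v_full_turn:
  assumes "reduced p t w" and "r < q"
  shows "(step_v q t ^^ q) (w, r) = (rot_e t 1 w, r)"
proof -
  have climb: "(step_v q t ^^ k) (w', r') = (w', r' + k)" if "r' + k < q" for k w' r'
    using that by (induction k) (simp_all add: step_v_def)
  have "(step_v q t ^^ (q - r)) (w, r) = step_v q t ((step_v q t ^^ (q - r - 1)) (w, r))"
    using assms(2) by (metis Suc_diff_Suc diff_Suc_1 funpow.simps(2) o_apply diff_Suc_eq_diff_pred)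
  also have "\<dots> = (rot_e t 1 w, 0)"
    using assms(2) climb[of r "q - r - 1" w] by (simp add: step_v_def)
  finally have "(step_v q t ^^ (q - r)) (w, r) = (rot_e t 1 w, 0)" .
  moreover have "(step_v q t ^^ q) (w, r) = (step_v q t ^^ r) ((step_v q t ^^ (q - r)) (w, r))"
    using assms(2) by (metis funpow_add le_add_diff_inverse less_imp_le o_apply)
  ultimately show ?thesis using climb[of 0 r "rot_e t 1 w"] assms(2) by simp
qed

lemma step_u_closed: "0 < p \<Longrightarrow> step_u p ` coset_space p q t \<subseteq> coset_space p q t"
  using shift_syl(1)[of p t _ False] by (auto simp: step_u_def coset_space_def)

lemma step_v_closed: "0 < t \<Longrightarrow> step_v q t ` coset_space p q t \<subseteq> coset_space p q t"
  using reduced_rot_e by (auto simp: step_v_def coset_space_def split: if_splits)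

lemma step_u_Bij:
  assumes "0 < p"
  shows "restrict (step_u p) (coset_space p q t) \<in> Bij (coset_space p q t)"
proof (rule restrict_in_Bij[OF step_u_closed[OF assms]])
  let ?back = "\<lambda>(w, r). (shift_syl p False (p - 1) w, r)"
  show "?back ` coset_space p q t \<subseteq> coset_space p q t"
    using shift_syl(1)[of p t _ False] assms by (auto simp: coset_space_def)
  have "shift_syl p False i (shift_syl p False j w) = w" if "reduced p t w" "i + j = p" for w i j
    using shift_syl_add[of p t w False i j] shift_syl_dvd[of p t w False p] that assms by simp
  then show "?back (step_u p x) = x" "step_u p (?back x) = x" if "x \<in> coset_space p q t" for x
    using that assms by (auto simp: step_u_def coset_space_def)
qed

lemma step_v_Bij:
  assumes "0 < q" and "0 < t"
  shows "restrict (step_v q t) (coset_space p q t) \<in> Bij (coset_space p q t)"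
proof (rule restrict_in_Bij[OF step_v_closed[OF assms(2)]])
  let ?back = "\<lambda>(w, r). if 0 < r then (w, r - 1) else (rot_e t (t - 1) w, q - 1)"
  show "?back ` coset_space p q t \<subseteq> coset_space p q t"
    using reduced_rot_e assms by (auto simp: coset_space_def split: if_splits)
  have "rot_e t i (rot_e t j w) = w" if "reduced p t w" "i + j = t" for w i j
    using rot_e_add[of p t w i j] rot_e_dvd[of p t w t] that assms by simp
  then show "?back (step_v q t x) = x" "step_v q t (?back x) = x" if "x \<in> coset_space p q t" for x
    using that assms by (auto simp: step_v_def coset_space_def)
qed

lemma step_v_funpow_mult:
  assumes "reduced p t w" and "r < q" and "0 < t"
  shows "(step_v q t ^^ (q * k)) (w, r) = (rot_e t k w, r)"
proof (induction k)
  case 0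
  show ?case using rot_e_dvd[OF assms(1), of 0] by simp
next
  case (Suc k)
  have "(step_v q t ^^ (q * Suc k)) (w, r) = (step_v q t ^^ q) ((step_v q t ^^ (q * k)) (w, r))"
    by (simp add: funpow_add)
  also have "\<dots> = (rot_e t 1 (rot_e t k w), r)"
    using Suc step_v_full_turn[OF reduced_rot_e[OF assms(1,3)] assms(2)] by simp
  finally show ?case using rot_e_add[OF assms(1,3), of 1 k] by simp
qed

lemma step_u_pow_BijGroup:
  assumes "0 < p"
  shows "restrict (step_u p) (coset_space p q t) [^]\<^bsub>BijGroup (coset_space p q t)\<^esub> (p * k)
       = \<one>\<^bsub>BijGroup (coset_space p q t)\<^esub>"
proof -
  have "(step_u p ^^ (p * k)) x = x" if "x \<in> coset_space p q t" for x
    using that step_u_funpow[of p t _ "p * k"] shift_syl_dvd[of p t _ False "p * k"] assms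
    by (auto simp: coset_space_def)
  then show ?thesis
    using BijGroup_pow_restrict[OF step_u_closed step_u_Bij] assms by (auto simp: BijGroup_def)
qed

lemma step_v_pow_BijGroup:
  assumes "0 < q" and "0 < t"
  shows "restrict (step_v q t) (coset_space p q t) [^]\<^bsub>BijGroup (coset_space p q t)\<^esub> (q * t)
       = \<one>\<^bsub>BijGroup (coset_space p q t)\<^esub>"
proof -
  have "(step_v q t ^^ (q * t)) x = x" if "x \<in> coset_space p q t" for x
    using that step_v_funpow_mult[of p t _ _ q t] rot_e_dvd[of p t _ t] assms
    by (auto simp: coset_space_def)
  then show ?thesis
    using BijGroup_pow_restrict[OF step_v_closed step_v_Bij] assms by (auto simp: BijGroup_def)
qed

section \<open>The factors A(t) and B(t)\<close>

(* g = False gives the factor A(t), with u = a, z = c and e = d; g = True gives B(t), with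
   u = b, z = d and e = c. *)
locale Gmnt_factor =
  fixes m n t :: nat and g :: bool and G (structure)
  defines G_def: "G \<equiv> Gmnt m n t"
  assumes m_gt1: "1 < m" and n_gt1: "1 < n" and t_pos: "0 < t"
begin

sublocale group G
  unfolding G_def by (rule group_Gmnt)

abbreviation p where "p \<equiv> rel_exp m n g"
abbreviation q where "q \<equiv> rel_exp m n (\<not> g)"
abbreviation u where "u \<equiv> gen m n t g"
abbreviation v where "v \<equiv> gen m n t (\<not> g)"
abbreviation z where "z \<equiv> u [^] p"
abbreviation e where "e \<equiv> v [^] q"
abbreviation H where "H \<equiv> Ht m n t"
abbreviation A where "A \<equiv> generate G (insert u H)"
abbreviation Y where "Y \<equiv> coset_space p q t"

lemma p_gt1: "1 < p" and p_pos: "0 < p" and q_pos: "0 < q"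
  using m_gt1 n_gt1 by (simp_all add: rel_exp_def)

lemma gen_in_carrier [simp]: "gen m n t h \<in> carrier G"
  by (simp add: G_def gen_def carrier_Gmnt)

lemma gen_pow_order: "gen m n t h [^] (rel_exp m n h * t) = \<one>"
  unfolding G_def gen_def wclass_pow by (rule relator_trivial) (simp add: relators_def rel_exp_def)

lemma u_pow_order: "u [^] (p * t) = \<one>" and e_pow_order: "e [^] t = \<one>" and z_pow_order: "z [^] t = \<one>"
  using gen_pow_order[of g] gen_pow_order[of "\<not> g"] by (simp_all add: nat_pow_pow)

lemma gen_pow_comm:
  "gen m n t False [^] m \<otimes> gen m n t True [^] n = gen m n t True [^] n \<otimes> gen m n t False [^] m"
    (is "?a \<otimes> ?b = ?b \<otimes> ?a")
proof -
  have "inv ?a \<otimes> inv ?b \<otimes> ?a \<otimes> ?b = \<one>"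
    using relator_trivial[of _ m n t]
    by (simp add: G_def gen_def wclass_pow inv_wclass mult_wclass relators_def)
  then have "inv (?b \<otimes> ?a) \<otimes> (?a \<otimes> ?b) = \<one>"
    by (simp add: inv_mult_group m_assoc)
  then have "inv (?a \<otimes> ?b) = inv (?b \<otimes> ?a)"
    by (intro inv_equality) simp_all
  then show ?thesis
    by (metis inv_inv gen_in_carrier nat_pow_closed m_closed)
qed

lemma z_e_comm: "z \<otimes> e = e \<otimes> z"
  using gen_pow_comm by (cases g) (simp_all add: rel_exp_def)

lemma H_eq: "H = generate G {z, e}"
  by (cases g) (simp_all add: Ht_def gen_c_def gen_d_def gen_a_def gen_b_def gen_def rel_exp_def
      G_def insert_commute)

lemma subgroup_generate_ue: "subgroup (generate G {u, e}) G"
  by (rule generate_is_subgroup) simp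

lemma A_subset: "A \<subseteq> generate G {u, e}"
proof (rule generate_subgroup_incl[OF _ subgroup_generate_ue])
  have "z \<in> generate G {u, e}" "e \<in> generate G {u, e}"
    using subgroup_int_pow_closed[OF subgroup_generate_ue, of _ "int _"]
      generate.incl[of _ "{u, e}" G]
    by (simp_all add: int_pow_int)
  then have "H \<subseteq> generate G {u, e}"
    unfolding H_eq using generate_subgroup_incl[OF _ subgroup_generate_ue] by simp
  then show "insert u H \<subseteq> generate G {u, e}" by (simp add: generate.incl)
qed

lemma z_pow_central:
  assumes "a \<in> generate G {u, e}"
  shows "z [^] (k::int) \<otimes> a = a \<otimes> z [^] k"
proof -
  have comm: "z [^] (j::nat) \<otimes> s = s \<otimes> z [^] j" if "s \<in> {u, e}" for j s
  proof -
    have "z [^] j \<otimes> u = u \<otimes> z [^] j"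
      using nat_pow_Suc[of u "p * j"] nat_pow_Suc2[of u "p * j"] by (simp add: nat_pow_pow)
    moreover have "z [^] j \<otimes> e = e \<otimes> z [^] j"
      using z_e_comm by (simp add: group_commutes_pow)
    ultimately show ?thesis using that by blast
  qed
  have "z [^] k = z [^] nat (k mod int t)"
    by (rule int_pow_eq_nat_mod) (simp_all add: z_pow_order t_pos)
  moreover have "z [^] nat (k mod int t) \<otimes> a = a \<otimes> z [^] nat (k mod int t)"
    by (rule generate_commute[OF _ _ comm assms]) simp_all
  ultimately show ?thesis by simp
qed

definition act :: "word set \<Rightarrow> syllables \<times> nat \<Rightarrow> syllables \<times> nat" where
  "act = lift_hom m n t (BijGroup Y)
     (\<lambda>h. if h = g then restrict (step_u p) Y else restrict (step_v q t) Y)"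

lemma act_hom: "act \<in> hom G (BijGroup Y)"
  and act_u: "act u = restrict (step_u p) Y" and act_v: "act v = restrict (step_v q t) Y"
proof -
  let ?B = "BijGroup Y"
  let ?f = "\<lambda>h. if h = g then restrict (step_u p) Y else restrict (step_v q t) Y"
  interpret B: group ?B by (rule group_BijGroup)
  have f: "?f h \<in> carrier ?B" for h
    using step_u_Bij[OF p_pos] step_v_Bij[OF q_pos t_pos] by (simp add: BijGroup_def)
  have fg: "?f g [^]\<^bsub>?B\<^esub> (p * k) = \<one>\<^bsub>?B\<^esub>" for k
    using step_u_pow_BijGroup[OF p_pos] by simp
  have ord: "?f h [^]\<^bsub>?B\<^esub> (rel_exp m n h * t) = \<one>\<^bsub>?B\<^esub>" for h
    using fg step_v_pow_BijGroup[OF q_pos t_pos] by (cases "h = g") (auto simp: rel_exp_def)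
  have comm: "?f False [^]\<^bsub>?B\<^esub> m \<otimes>\<^bsub>?B\<^esub> ?f True [^]\<^bsub>?B\<^esub> n
      = ?f True [^]\<^bsub>?B\<^esub> n \<otimes>\<^bsub>?B\<^esub> ?f False [^]\<^bsub>?B\<^esub> m"
  proof -
    have "?f False [^]\<^bsub>?B\<^esub> m = \<one>\<^bsub>?B\<^esub> \<or> ?f True [^]\<^bsub>?B\<^esub> n = \<one>\<^bsub>?B\<^esub>"
      using fg[of 1] by (cases g) (simp_all add: rel_exp_def)
    moreover have "x \<otimes>\<^bsub>?B\<^esub> y = y \<otimes>\<^bsub>?B\<^esub> x"
      if "x = \<one>\<^bsub>?B\<^esub> \<or> y = \<one>\<^bsub>?B\<^esub>" "x \<in> carrier ?B" "y \<in> carrier ?B" for x y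
      using that by auto
    ultimately show ?thesis using B.nat_pow_closed[OF f] by blast
  qed
  show "act \<in> hom G ?B"
    using B.lift_hom(1)[OF f comm ord] by (simp add: act_def G_def)
  show "act u = restrict (step_u p) Y" "act v = restrict (step_v q t) Y"
    using B.lift_hom(2)[OF f comm ord] by (simp_all add: act_def)
qed

sublocale act: group_action G Y act
  by (rule group_action.intro)
     (simp add: group_hom_def group_hom_axioms_def act_hom group_BijGroup is_group)

lemma act_z: "act z = \<one>\<^bsub>BijGroup Y\<^esub>"
  using group_hom.hom_nat_pow[OF act.group_hom, of u p] step_u_pow_BijGroup[OF p_pos, where k=1]
  by (simp add: act_u)

lemma act_z_pow: "x \<in> Y \<Longrightarrow> act (z [^] (k::int)) x = x"
proof -
  have "act (z [^] k) = \<one>\<^bsub>BijGroup Y\<^esub>"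
    using group_hom.hom_int_pow[OF act.group_hom, of z k] act_z group.int_pow_one[OF group_BijGroup]
    by simp
  then show "x \<in> Y \<Longrightarrow> act (z [^] k) x = x" by (simp add: BijGroup_def)
qed

lemma act_e_pow:
  assumes "reduced p t w"
  shows "act (e [^] (k::nat)) (w, 0) = (rot_e t k w, 0)"
proof -
  have "act (e [^] k) = restrict (step_v q t ^^ (q * k)) Y"
    using group_hom.hom_nat_pow[OF act.group_hom, of v "q * k"]
      BijGroup_pow_restrict[OF step_v_closed[OF t_pos] step_v_Bij[OF q_pos t_pos]]
    by (simp add: act_v nat_pow_pow)
  then show ?thesis
    using step_v_funpow_mult[OF assms q_pos t_pos] assms q_pos by (simp add: coset_space_def)
qed

lemma act_e_int_pow:
  assumes "reduced p t w"
  shows "act (e [^] (j::int)) (w, 0) = (rot_e t (nat (j mod int t)) w, 0)"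
proof -
  have "e [^] j = e [^] nat (j mod int t)"
    by (rule int_pow_eq_nat_mod) (simp_all add: e_pow_order t_pos)
  then show ?thesis by (simp only: act_e_pow[OF assms])
qed

lemma act_u_apply: "x \<in> Y \<Longrightarrow> act u x = step_u p x"
  by (simp add: act_u)

definition exp_sum :: "word set \<Rightarrow> int" where
  "exp_sum = lift_hom m n t (integer_mod_group (p * t)) (\<lambda>h. if h = g then 1 else 0)"

lemma exp_sum_hom: "exp_sum \<in> hom G (integer_mod_group (p * t))"
  and exp_sum_u: "exp_sum u = 1" and exp_sum_v: "exp_sum v = 0"
proof -
  let ?Z = "integer_mod_group (p * t)"
  let ?f = "\<lambda>h. if h = g then 1 else (0::int)"
  interpret Z: group ?Z by simp
  have "p \<le> p * t" using t_pos by simp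
  then have "1 < p * t" using p_gt1 by linarith
  then have "1 < int p * int t" by (metis of_nat_1 of_nat_less_iff of_nat_mult)
  then have f: "?f h \<in> carrier ?Z" for h
    by (simp add: carrier_integer_mod_group)
  have ord: "?f h [^]\<^bsub>?Z\<^esub> (rel_exp m n h * t) = \<one>\<^bsub>?Z\<^esub>" for h
    using \<open>1 < p * t\<close> by (auto simp: rel_exp_def)
  have comm: "?f False [^]\<^bsub>?Z\<^esub> m \<otimes>\<^bsub>?Z\<^esub> ?f True [^]\<^bsub>?Z\<^esub> n
      = ?f True [^]\<^bsub>?Z\<^esub> n \<otimes>\<^bsub>?Z\<^esub> ?f False [^]\<^bsub>?Z\<^esub> m"
    by (simp add: add.commute)
  show "exp_sum \<in> hom G ?Z"
    using Z.lift_hom(1)[OF f comm ord] by (simp add: exp_sum_def G_def)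
  show "exp_sum u = 1" "exp_sum v = 0"
    using Z.lift_hom(2)[OF f comm ord] by (simp_all add: exp_sum_def)
qed

sublocale exp_sum: group_hom G "integer_mod_group (p * t)" exp_sum
  by (simp add: group_hom_def group_hom_axioms_def exp_sum_hom is_group)

lemma exp_sum_e_pow: "exp_sum (e [^] (j::int)) = 0"
  using exp_sum.hom_int_pow[of e j] exp_sum.hom_nat_pow[of v q] exp_sum_v
  by (simp add: int_pow_integer_mod_group)

lemma exp_sum_z_pow: "exp_sum (z [^] (k::int)) = int p * (k mod int t)"
  using exp_sum.hom_int_pow[of z k] exp_sum.hom_nat_pow[of u p] exp_sum_u
  by (simp add: int_pow_integer_mod_group mod_mult_right_eq)

lemma subgroup_H: "subgroup H G" and z_in_H: "z \<in> H" and e_in_H: "e \<in> H"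
  unfolding H_eq by (auto intro: generate_is_subgroup generate.incl)

lemma nat_pow_in_H: "x \<in> H \<Longrightarrow> x [^] (k::nat) \<in> H"
  using subgroup_int_pow_closed[OF subgroup_H, of x "int k"] by (simp add: int_pow_int)

lemma e_int_pow_in_generate: "e [^] (j::int) \<in> generate G {u, e}"
  by (rule subgroup_int_pow_closed[OF subgroup_generate_ue]) (simp add: generate.incl)

lemma A_in_generate: "y \<in> A \<Longrightarrow> y \<in> generate G {u, e}"
  using A_subset by (rule subsetD)

lemma A_in_carrier: "y \<in> A \<Longrightarrow> y \<in> carrier G"
  using subgroup.subset[OF subgroup_generate_ue] A_in_generate by (rule subsetD)

lemma subgroup_A: "subgroup A G"
  by (rule generate_is_subgroup) (use subgroup.subset[OF subgroup_H] in simp)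

definition syl_prod :: "syllables \<Rightarrow> word set" where
  "syl_prod w = foldr (\<lambda>(h, k) x. (if h then e else u) [^] k \<otimes> x) w \<one>"

lemma syl_prod_Nil [simp]: "syl_prod [] = \<one>"
  and syl_prod_Cons [simp]: "syl_prod ((h, k) # w) = (if h then e else u) [^] k \<otimes> syl_prod w"
  by (simp_all add: syl_prod_def)

lemma syl_prod_closed [simp]: "syl_prod w \<in> carrier G"
  by (induction w) auto

lemma syl_prod_cons_syl: "syl_prod (cons_syl h k w) = (if h then e else u) [^] k \<otimes> syl_prod w"
  by (simp add: cons_syl_def)

lemma syl_prod_split:
  "reduced p t w \<Longrightarrow> syl_prod w = (if h then e else u) [^] hd_exp h w \<otimes> syl_prod (tl_syl h w)"
  using syl_prod_cons_syl[of h "hd_exp h w" "tl_syl h w"] cons_syl_hd_exp_tl_syl by simp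

lemma syl_prod_in_generate: "syl_prod w \<in> generate G {u, e}"
proof (induction w)
  case Nil
  show ?case by (simp add: generate.one)
next
  case (Cons s w)
  have "x [^] (k::nat) \<in> generate G {u, e}" if "x \<in> {u, e}" for x k
    using subgroup_int_pow_closed[OF subgroup_generate_ue generate.incl[OF that], of "int k"]
    by (simp add: int_pow_int)
  then show ?case using Cons subgroup.m_closed[OF subgroup_generate_ue] by (cases s) simp
qed

lemma u_mult_syl_prod:
  assumes "reduced p t w"
  shows "u \<otimes> syl_prod w = syl_prod (shift_syl p False 1 w) \<otimes> z [^] ((hd_exp False w + 1) div p)"
proof -
  let ?a = "hd_exp False w + 1" and ?w' = "tl_syl False w"
  have "u \<otimes> syl_prod w = u [^] ?a \<otimes> syl_prod ?w'"
    using syl_prod_split[OF assms, of False] nat_pow_Suc2[of u "hd_exp False w"]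
    by (simp add: m_assoc)
  also have "u [^] ?a = u [^] (?a mod p) \<otimes> z [^] (?a div p)"
    using nat_pow_mult[of u "?a mod p" "p * (?a div p)"] by (simp add: nat_pow_pow)
  also have "z [^] (?a div p) \<otimes> syl_prod ?w' = syl_prod ?w' \<otimes> z [^] (?a div p)"
    using z_pow_central[OF syl_prod_in_generate, of "int (?a div p)"] by (simp add: int_pow_int)
  then have "u [^] (?a mod p) \<otimes> z [^] (?a div p) \<otimes> syl_prod ?w'
      = u [^] (?a mod p) \<otimes> syl_prod ?w' \<otimes> z [^] (?a div p)"
    by (simp add: m_assoc)
  finally show ?thesis by (simp add: shift_syl_def syl_prod_cons_syl)
qed

lemma e_mult_syl_prod:
  assumes "reduced p t w"
  shows "e \<otimes> syl_prod w = syl_prod (rot_e t 1 w) \<otimes> (if tl_syl True w = [] then e else \<one>)"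
proof (cases "tl_syl True w = []")
  case True
  then have "syl_prod w = e [^] hd_exp True w" using syl_prod_split[OF assms, of True] by simp
  then show ?thesis
    using True nat_pow_Suc[of e "hd_exp True w"] nat_pow_Suc2[of e "hd_exp True w"]
    by (simp add: rot_e_def)
next
  case False
  let ?a = "hd_exp True w + 1"
  have "e [^] (t * (?a div t)) = \<one>"
    using nat_pow_pow[of e t "?a div t"] e_pow_order by (simp del: nat_pow_pow)
  then have "e [^] ?a = e [^] (?a mod t)"
    using nat_pow_mult[of e "?a mod t" "t * (?a div t)"] by (simp del: nat_pow_pow)
  then have "e \<otimes> syl_prod w = e [^] (?a mod t) \<otimes> syl_prod (tl_syl True w)"
    using syl_prod_split[OF assms, of True] nat_pow_Suc2[of e "hd_exp True w"]
    by (simp add: m_assoc)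
  then show ?thesis using False by (simp add: rot_e_def shift_syl_def syl_prod_cons_syl)
qed

definition normal_form_set :: "word set set" where
  "normal_form_set = {y \<in> carrier G.
     \<exists>w h. reduced p t w \<and> h \<in> H \<and> y = syl_prod w \<otimes> h \<and> act y ([], 0) = (w, 0)}"

lemma H_in_carrier: "h \<in> H \<Longrightarrow> h \<in> carrier G"
  using subgroup.subset[OF subgroup_H] by blast

lemma base_point_in_Y: "reduced p t w \<Longrightarrow> (w, 0) \<in> Y"
  using q_pos by (simp add: coset_space_def)

lemma normal_form_setI:
  assumes "reduced p t w" and "h \<in> H" and "y = syl_prod w \<otimes> h" and "act y ([], 0) = (w, 0)"
  shows "y \<in> normal_form_set"
  unfolding normal_form_set_def
proof (intro CollectI conjI)
  show "y \<in> carrier G" using assms(2,3) H_in_carrier by simp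
  show "\<exists>w h. reduced p t w \<and> h \<in> H \<and> y = syl_prod w \<otimes> h \<and> act y ([], 0) = (w, 0)"
    using assms by (intro exI[of _ w] exI[of _ h]) simp
qed

lemma normal_form_set_mult:
  assumes s: "s \<in> {u, e}" and y_nf: "y \<in> normal_form_set"
  shows "s \<otimes> y \<in> normal_form_set"
proof -
  obtain w h where w: "reduced p t w" and h: "h \<in> H" and y: "y = syl_prod w \<otimes> h"
    and act_y: "act y ([], 0) = (w, 0)"
    using y_nf by (auto simp: normal_form_set_def)
  have act_sy: "act (s \<otimes> y) ([], 0) = act s (w, 0)"
    using act.composition_rule[of "([], 0)" s y] s y_nf act_y base_point_in_Y[of "[]"]
    by (auto simp: normal_form_set_def)
  show ?thesis
  proof (cases "s = u")
    case True
    let ?h = "z [^] ((hd_exp False w + 1) div p) \<otimes> h"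
    show ?thesis
    proof (rule normal_form_setI)
      show "reduced p t (shift_syl p False 1 w)" using shift_syl(1)[OF w, of False] p_pos by simp
      show "?h \<in> H" using nat_pow_in_H[OF z_in_H] subgroup.m_closed[OF subgroup_H] h by blast
      show "s \<otimes> y = syl_prod (shift_syl p False 1 w) \<otimes> ?h"
        using True u_mult_syl_prod[OF w] H_in_carrier[OF h] by (simp add: y m_assoc[symmetric])
      show "act (s \<otimes> y) ([], 0) = (shift_syl p False 1 w, 0)"
        using act_sy True act_u_apply[OF base_point_in_Y[OF w]] by (simp add: step_u_def)
    qed
  next
    case False
    then have s: "s = e" using s by simp
    let ?h = "(if tl_syl True w = [] then e else \<one>) \<otimes> h"
    show ?thesis
    proof (rule normal_form_setI)
      show "reduced p t (rot_e t 1 w)" using reduced_rot_e[OF w t_pos] .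
      show "?h \<in> H"
        using e_in_H subgroup.one_closed[OF subgroup_H] subgroup.m_closed[OF subgroup_H] h by auto
      show "s \<otimes> y = syl_prod (rot_e t 1 w) \<otimes> ?h"
        using s e_mult_syl_prod[OF w] H_in_carrier[OF h] by (simp add: y m_assoc[symmetric])
      show "act (s \<otimes> y) ([], 0) = (rot_e t 1 w, 0)"
        using act_sy s act_e_pow[OF w, of 1] by simp
    qed
  qed
qed

lemma normal_form_set_pow_mult:
  "s \<in> {u, e} \<Longrightarrow> y \<in> normal_form_set \<Longrightarrow> s [^] (k::nat) \<otimes> y \<in> normal_form_set"
proof (induction k)
  case (Suc k)
  have "s \<in> carrier G" "y \<in> carrier G" using Suc.prems by (auto simp: normal_form_set_def)
  moreover have "s [^] Suc k = s \<otimes> s [^] k" using \<open>s \<in> carrier G\<close> by (rule nat_pow_Suc2)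
  ultimately have "s [^] Suc k \<otimes> y = s \<otimes> (s [^] k \<otimes> y)" by (simp add: m_assoc)
  then show ?case using normal_form_set_mult Suc by simp
qed (auto simp: normal_form_set_def)

lemma generate_subset_normal_form_set: "generate G {u, e} \<subseteq> normal_form_set"
proof (rule generate_subset_left_closed)
  show "\<one> \<in> normal_form_set"
    using normal_form_setI[of "[]" \<one> \<one>] act.id_eq_one[symmetric] base_point_in_Y[of "[]"]
      subgroup.one_closed[OF subgroup_H]
    by simp
  have "inv s = s [^] (if s = u then p * t - 1 else t - 1)" if "s \<in> {u, e}" for s
    using that inv_eq_nat_pow[of u "p * t"] inv_eq_nat_pow[of e t] u_pow_order e_pow_order
      p_pos t_pos
    by auto
  then show "inv s \<otimes> y \<in> normal_form_set" if "s \<in> {u, e}" "y \<in> normal_form_set" for s y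
    using normal_form_set_pow_mult[OF that] that(1) by presburger
  show "s \<otimes> y \<in> normal_form_set" if "s \<in> {u, e}" "y \<in> normal_form_set" for s y
    using that by (rule normal_form_set_mult)
qed (auto simp: normal_form_set_def)

lemma act_outside_H:
  assumes "y \<in> A" and "y \<notin> H"
  obtains w where "reduced p t w" and "tl_syl True w \<noteq> []" and "act y ([], 0) = (w, 0)"
proof -
  have "y \<in> normal_form_set"
    using generate_subset_normal_form_set A_in_generate[OF assms(1)] by blast
  then obtain w h where w: "reduced p t w" and h: "h \<in> H" and y: "y = syl_prod w \<otimes> h"
    and act_y: "act y ([], 0) = (w, 0)"
    by (auto simp: normal_form_set_def)
  have "tl_syl True w \<noteq> []"
  proof
    assume "tl_syl True w = []"
    then have "syl_prod w \<in> H" using syl_prod_split[OF w, of True] nat_pow_in_H[OF e_in_H] by simp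
    then have "y \<in> H" using y h subgroup.m_closed[OF subgroup_H] by simp
    with assms(2) show False ..
  qed
  then show thesis by (rule that[OF w _ act_y])
qed

lemma left_exponent_unique:
  fixes j j2 k j' j2' k' :: int
  assumes y: "y \<in> A" "y \<notin> H"
    and eq: "e [^] j \<otimes> y \<otimes> e [^] j2 \<otimes> z [^] k = e [^] j' \<otimes> y \<otimes> e [^] j2' \<otimes> z [^] k'"
  shows "[j = j'] (mod int t)"
proof -
  obtain w where w: "reduced p t w" "tl_syl True w \<noteq> []" and act_y: "act y ([], 0) = (w, 0)"
    using act_outside_H[OF y] .
  have act_form:
    "act (e [^] i \<otimes> y \<otimes> e [^] i2 \<otimes> z [^] l) ([], 0) = (rot_e t (nat (i mod int t)) w, 0)"
    for i i2 l :: int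
    using A_in_carrier[OF y(1)] base_point_in_Y[of "[]"] base_point_in_Y[OF w(1)] act_y
    by (simp add: act.composition_rule act_z_pow act_e_int_pow w(1))
  have "rot_e t (nat (j mod int t)) w = rot_e t (nat (j' mod int t)) w"
    using act_form[of j j2 k] act_form[of j' j2' k'] eq by simp
  then have "[nat (j mod int t) = nat (j' mod int t)] (mod t)"
    by (rule rot_e_cong[OF w(1) t_pos w(2)])
  then have "nat (j mod int t) = nat (j' mod int t)"
    using t_pos by (simp add: cong_def nat_less_iff)
  then show ?thesis using t_pos by (simp add: cong_def eq_nat_nat_iff)
qed

lemma inv_normal_form:
  fixes j j2 k :: int
  assumes "y \<in> A"
  shows "inv (e [^] j \<otimes> y \<otimes> e [^] j2 \<otimes> z [^] k) = e [^] (- j2) \<otimes> inv y \<otimes> e [^] (- j) \<otimes> z [^] (- k)"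
proof -
  have yc: "y \<in> carrier G" by (rule A_in_carrier[OF assms])
  have "e [^] (- j2) \<otimes> inv y \<otimes> e [^] (- j) \<in> generate G {u, e}"
    using subgroup.m_closed[OF subgroup_generate_ue] e_int_pow_in_generate
      subgroup.m_inv_closed[OF subgroup_generate_ue A_in_generate[OF assms]] by blast
  then have "z [^] (- k) \<otimes> (e [^] (- j2) \<otimes> inv y \<otimes> e [^] (- j))
      = e [^] (- j2) \<otimes> inv y \<otimes> e [^] (- j) \<otimes> z [^] (- k)"
    by (rule z_pow_central)
  moreover have "inv (e [^] j \<otimes> y \<otimes> e [^] j2 \<otimes> z [^] k)
      = z [^] (- k) \<otimes> (e [^] (- j2) \<otimes> inv y \<otimes> e [^] (- j))"
    using yc by (simp add: inv_mult_group int_pow_neg m_assoc)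
  ultimately show ?thesis by simp
qed

lemma exp_sum_normal_form:
  fixes j j2 k :: int
  assumes "y \<in> carrier G"
  shows "exp_sum (e [^] j \<otimes> y \<otimes> e [^] j2 \<otimes> z [^] k)
       = (exp_sum y + int p * (k mod int t)) mod (int p * int t)"
  using assms exp_sum.hom_closed[OF assms]
  by (simp add: exp_sum_e_pow exp_sum_z_pow carrier_integer_mod_group mod_simps)

lemma exponents_unique:
  fixes j j2 k j' j2' k' :: int
  assumes y: "y \<in> A" "y \<notin> H"
    and eq: "e [^] j \<otimes> y \<otimes> e [^] j2 \<otimes> z [^] k = e [^] j' \<otimes> y \<otimes> e [^] j2' \<otimes> z [^] k'"
  shows "[j = j'] (mod int t) \<and> [j2 = j2'] (mod int t) \<and> [k = k'] (mod int t)"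
proof (intro conjI)
  show "[j = j'] (mod int t)" by (rule left_exponent_unique[OF y eq])
  have "inv y \<in> A" by (rule subgroup.m_inv_closed[OF subgroup_A y(1)])
  moreover have "inv y \<notin> H"
  proof
    assume "inv y \<in> H"
    then have "inv (inv y) \<in> H" by (rule subgroup.m_inv_closed[OF subgroup_H])
    with y A_in_carrier show False by simp
  qed
  moreover have "e [^] (- j2) \<otimes> inv y \<otimes> e [^] (- j) \<otimes> z [^] (- k)
      = e [^] (- j2') \<otimes> inv y \<otimes> e [^] (- j') \<otimes> z [^] (- k')"
    using arg_cong[OF eq, of "\<lambda>x. inv x"] by (simp only: inv_normal_form[OF y(1)])
  ultimately have "[- j2 = - j2'] (mod int t)" by (rule left_exponent_unique)
  then show "[j2 = j2'] (mod int t)" by (simp add: cong_minus_minus_iff)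
  have "(exp_sum y + int p * (k mod int t)) mod (int p * int t)
      = (exp_sum y + int p * (k' mod int t)) mod (int p * int t)"
    using arg_cong[OF eq, of exp_sum] by (simp only: exp_sum_normal_form[OF A_in_carrier[OF y(1)]])
  then have "[int p * (k mod int t) = int p * (k' mod int t)] (mod int p * int t)"
    by (simp only: cong_def[symmetric] cong_add_lcancel)
  then show "[k = k'] (mod int t)" using p_pos by (simp add: cong_def mod_mult_mult1)
qed

lemma z_first_normal_form:
  fixes j1 j2 k1 k2 :: int
  assumes "y \<in> A"
  shows "z [^] k1 \<otimes> e [^] j1 \<otimes> y \<otimes> z [^] k2 \<otimes> e [^] j2 = e [^] j1 \<otimes> y \<otimes> e [^] j2 \<otimes> z [^] (k1 + k2)"
proof -
  have yc: "y \<in> carrier G" by (rule A_in_carrier[OF assms])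
  have "e [^] j1 \<otimes> y \<in> generate G {u, e}"
    using subgroup.m_closed[OF subgroup_generate_ue e_int_pow_in_generate A_in_generate[OF assms]] .
  then have c1: "z [^] k1 \<otimes> (e [^] j1 \<otimes> y) = e [^] j1 \<otimes> y \<otimes> z [^] k1" by (rule z_pow_central)
  have c2: "z [^] (k1 + k2) \<otimes> e [^] j2 = e [^] j2 \<otimes> z [^] (k1 + k2)"
    by (rule z_pow_central[OF e_int_pow_in_generate])
  have "z [^] k1 \<otimes> e [^] j1 \<otimes> y \<otimes> z [^] k2 \<otimes> e [^] j2
      = z [^] k1 \<otimes> (e [^] j1 \<otimes> y) \<otimes> z [^] k2 \<otimes> e [^] j2"
    using yc by (simp add: m_assoc)
  also have "\<dots> = e [^] j1 \<otimes> y \<otimes> (z [^] (k1 + k2) \<otimes> e [^] j2)"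
    using yc by (simp add: c1 m_assoc int_pow_mult)
  also have "\<dots> = e [^] j1 \<otimes> y \<otimes> e [^] j2 \<otimes> z [^] (k1 + k2)"
    using yc by (simp add: c2 m_assoc)
  finally show ?thesis .
qed

lemma e_first_normal_form:
  fixes j1 j2 k1 k2 :: int
  assumes "y \<in> A"
  shows "e [^] j1 \<otimes> z [^] k1 \<otimes> y \<otimes> e [^] j2 \<otimes> z [^] k2 = e [^] j1 \<otimes> y \<otimes> e [^] j2 \<otimes> z [^] (k1 + k2)"
proof -
  have yc: "y \<in> carrier G" by (rule A_in_carrier[OF assms])
  have "y \<otimes> e [^] j2 \<in> generate G {u, e}"
    using subgroup.m_closed[OF subgroup_generate_ue A_in_generate[OF assms] e_int_pow_in_generate] .
  then have c: "z [^] k1 \<otimes> (y \<otimes> e [^] j2) = y \<otimes> e [^] j2 \<otimes> z [^] k1" by (rule z_pow_central)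
  have "e [^] j1 \<otimes> z [^] k1 \<otimes> y \<otimes> e [^] j2 \<otimes> z [^] k2
      = e [^] j1 \<otimes> (z [^] k1 \<otimes> (y \<otimes> e [^] j2)) \<otimes> z [^] k2"
    using yc by (simp add: m_assoc)
  also have "\<dots> = e [^] j1 \<otimes> y \<otimes> e [^] j2 \<otimes> z [^] (k1 + k2)"
    using yc by (simp add: c m_assoc int_pow_mult)
  finally show ?thesis .
qed

lemma exponents_unique_z_first:
  fixes \<alpha> \<beta> \<gamma> \<delta> \<alpha>' \<beta>' \<gamma>' \<delta>' :: int
  assumes "y \<in> A" and "y \<notin> H"
    and "x = z [^] \<alpha> \<otimes> e [^] \<beta> \<otimes> y \<otimes> z [^] \<gamma> \<otimes> e [^] \<delta>"
    and "x = z [^] \<alpha>' \<otimes> e [^] \<beta>' \<otimes> y \<otimes> z [^] \<gamma>' \<otimes> e [^] \<delta>'"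
  shows "[\<alpha> + \<gamma> = \<alpha>' + \<gamma>'] (mod int t) \<and> [\<beta> = \<beta>'] (mod int t) \<and> [\<delta> = \<delta>'] (mod int t)"
proof -
  have "e [^] \<beta> \<otimes> y \<otimes> e [^] \<delta> \<otimes> z [^] (\<alpha> + \<gamma>) = x"
    using assms(3) by (simp add: z_first_normal_form[OF assms(1)])
  also have "x = e [^] \<beta>' \<otimes> y \<otimes> e [^] \<delta>' \<otimes> z [^] (\<alpha>' + \<gamma>')"
    using assms(4) by (simp add: z_first_normal_form[OF assms(1)])
  finally show ?thesis using exponents_unique[OF assms(1,2)] by blast
qed

lemma exponents_unique_e_first:
  fixes \<alpha> \<beta> \<gamma> \<delta> \<alpha>' \<beta>' \<gamma>' \<delta>' :: int
  assumes "y \<in> A" and "y \<notin> H"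
    and "x = e [^] \<alpha> \<otimes> z [^] \<beta> \<otimes> y \<otimes> e [^] \<gamma> \<otimes> z [^] \<delta>"
    and "x = e [^] \<alpha>' \<otimes> z [^] \<beta>' \<otimes> y \<otimes> e [^] \<gamma>' \<otimes> z [^] \<delta>'"
  shows "[\<beta> + \<delta> = \<beta>' + \<delta>'] (mod int t) \<and> [\<alpha> = \<alpha>'] (mod int t) \<and> [\<gamma> = \<gamma>'] (mod int t)"
proof -
  have "e [^] \<alpha> \<otimes> y \<otimes> e [^] \<gamma> \<otimes> z [^] (\<beta> + \<delta>) = x"
    using assms(3) by (simp add: e_first_normal_form[OF assms(1)])
  also have "x = e [^] \<alpha>' \<otimes> y \<otimes> e [^] \<gamma>' \<otimes> z [^] (\<beta>' + \<delta>')"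
    using assms(4) by (simp add: e_first_normal_form[OF assms(1)])
  finally show ?thesis using exponents_unique[OF assms(1,2)] by blast
qed

end

theorem lemma2:
  fixes m n t :: nat
  assumes "m > 1" and "n > 1" and "t > 1"
  defines "G \<equiv> Gmnt m n t" and "c \<equiv> gen_c m n t" and "d \<equiv> gen_d m n t"
  shows "(\<forall>x \<in> At m n t. \<forall>y \<in> At m n t. x \<notin> Ht m n t \<longrightarrow> y \<notin> Ht m n t \<longrightarrow>
            (\<forall>\<alpha> \<beta> \<gamma> \<delta> \<alpha>' \<beta>' \<gamma>' \<delta>' :: int.
               x = c [^]\<^bsub>G\<^esub> \<alpha> \<otimes>\<^bsub>G\<^esub> d [^]\<^bsub>G\<^esub> \<beta> \<otimes>\<^bsub>G\<^esub> y \<otimes>\<^bsub>G\<^esub> c [^]\<^bsub>G\<^esub> \<gamma> \<otimes>\<^bsub>G\<^esub> d [^]\<^bsub>G\<^esub> \<delta> \<longrightarrow>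
               x = c [^]\<^bsub>G\<^esub> \<alpha>' \<otimes>\<^bsub>G\<^esub> d [^]\<^bsub>G\<^esub> \<beta>' \<otimes>\<^bsub>G\<^esub> y \<otimes>\<^bsub>G\<^esub> c [^]\<^bsub>G\<^esub> \<gamma>' \<otimes>\<^bsub>G\<^esub> d [^]\<^bsub>G\<^esub> \<delta>' \<longrightarrow>
               [\<alpha> + \<gamma> = \<alpha>' + \<gamma>'] (mod int t) \<and> [\<beta> = \<beta>'] (mod int t) \<and> [\<delta> = \<delta>'] (mod int t)))
       \<and> (\<forall>x \<in> Bt m n t. \<forall>y \<in> Bt m n t. x \<notin> Ht m n t \<longrightarrow> y \<notin> Ht m n t \<longrightarrow>
            (\<forall>\<alpha> \<beta> \<gamma> \<delta> \<alpha>' \<beta>' \<gamma>' \<delta>' :: int.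
               x = c [^]\<^bsub>G\<^esub> \<alpha> \<otimes>\<^bsub>G\<^esub> d [^]\<^bsub>G\<^esub> \<beta> \<otimes>\<^bsub>G\<^esub> y \<otimes>\<^bsub>G\<^esub> c [^]\<^bsub>G\<^esub> \<gamma> \<otimes>\<^bsub>G\<^esub> d [^]\<^bsub>G\<^esub> \<delta> \<longrightarrow>
               x = c [^]\<^bsub>G\<^esub> \<alpha>' \<otimes>\<^bsub>G\<^esub> d [^]\<^bsub>G\<^esub> \<beta>' \<otimes>\<^bsub>G\<^esub> y \<otimes>\<^bsub>G\<^esub> c [^]\<^bsub>G\<^esub> \<gamma>' \<otimes>\<^bsub>G\<^esub> d [^]\<^bsub>G\<^esub> \<delta>' \<longrightarrow>
               [\<beta> + \<delta> = \<beta>' + \<delta>'] (mod int t) \<and> [\<alpha> = \<alpha>'] (mod int t) \<and> [\<gamma> = \<gamma>'] (mod int t)))"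
proof -
  interpret a: Gmnt_factor m n t False "Gmnt m n t" by unfold_locales (use assms in auto)
  interpret b: Gmnt_factor m n t True "Gmnt m n t" by unfold_locales (use assms in auto)
  have A: "a.A = At m n t" "a.z = gen_c m n t" "a.e = gen_d m n t"
    and B: "b.A = Bt m n t" "b.e = gen_c m n t" "b.z = gen_d m n t"
    by (simp_all add: At_def Bt_def gen_c_def gen_d_def gen_a_def gen_b_def gen_def rel_exp_def)
  show ?thesis
    unfolding G_def c_def d_def
    by (rule conjI; intro ballI impI allI;
        rule a.exponents_unique_z_first[unfolded A] b.exponents_unique_e_first[unfolded B];
        assumption)
qed

end
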